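(* For all integers $n\ge k\ge0$, $$a_{2n+1,k}=\frac{1}{2^k}\sum_{i=0}^{\lfloor k/2\rfloor}(-1)^i\frac{n-k+2i}{n-k+i}\binom{n-k+i}{i}A_{2n+1,k-2i},$$ $$a_{2n+2,k}=\frac{1}{2^k}\sum_{\substack{i,j,r\ge0\\ 2i+j+r=k}}(-1)^{r+i}\frac{n-k+2i}{n-k+i}\binom{n-k+i}{i}A_{2n+2,j},$$ where the factor $\frac{n-k+2i}{n-k+i}\binom{n-k+i}{i}$ is interpreted as $1$ when $n-k+i=0$ (i.e. $k=n$, $i=0$).
   Context: For a permutation $\pi=a_1\cdots a_n$ of $[n]$, an index $i\in[n-1]$ is a descent if $a_i>a_{i+1}$. $A_{n,k}$ (Eulerian number) is the number of $\pi\in\mathfrak S_n$ with exactly $k$ descents. $a_{n,k}$ is the number of $\pi\in\mathfrak S_n$ having exactly $k$ descents at even positions and no descents at odd positions. *)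

theory Defs
  imports Complex_Main "HOL-Combinatorics.Multiset_Permutations"
begin

text \<open>A permutation pi = a_1 ... a_n of [n] is a list xs with xs ! (i-1) = a_i.
  Index i in [n-1] (1-based) is a descent if a_i > a_(i+1).\<close>
definition descents :: "nat list \<Rightarrow> nat set" where
  "descents xs = {i \<in> {1..<length xs}. xs ! (i - 1) > xs ! i}"

definition eulerian :: "nat \<Rightarrow> nat \<Rightarrow> nat" where
  "eulerian n k = card {xs \<in> permutations_of_set {1..n}. card (descents xs) = k}"

definition even_desc :: "nat \<Rightarrow> nat \<Rightarrow> nat" where
  "even_desc n k = card {xs \<in> permutations_of_set {1..n}.
      (\<forall>i \<in> descents xs. even i) \<and> card (descents xs) = k}"

definition coef :: "nat \<Rightarrow> nat \<Rightarrow> real" where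
  "coef m i = (if m + i = 0 then 1
     else (real (m + 2*i) / real (m + i)) * real ((m + i) choose i))"

end

theory Submission
  imports Defs "HOL-Computational_Algebra.Formal_Power_Series"
begin

text \<open>Inserting the largest letter into a permutation splits it into a left and a right block,
  which gives binomial convolution recurrences for the descent polynomials
  A_N(t) = \<Sum>_k A_(N,k) t^k and a_N(s) = \<Sum>_k a_(N,k) s^k. For exponential generating functions
  in x this means that \<Sum> A_N(t) x^N/N! solves the Riccati equation U' = t U^2 + (1 - t) U, while the
  odd and even parts P, E of \<Sum> (1+t^2)^(N div 2) a_N(2t/(1+t^2)) x^N/N! solve a first-order system.
  That system has a first integral, which makes 1 + (1+t)/(1+t^2) (E - 1) + P a solution of the same
  Riccati equation with the same constant term. Hence A_(2n+1)(t) = (1+t^2)^n a_(2n+1)(2t/(1+t^2))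
  and A_(2n+2)(t) = (1+t)(1+t^2)^n a_(2n+2)(2t/(1+t^2)). Comparing coefficients, the expansion in
  the basis t^k (1+t^2)^(n-k) is inverted by an alternating Vandermonde identity, which is where
  the factor coef comes from; in even length the factor 1+t is first removed by alternating
  partial sums, which is where the index r comes from.\<close>

unbundle fps_syntax

section \<open>Descents and insertion of the largest letter\<close>

lemma descents_subset: "descents xs \<subseteq> {1..<length xs}"
  unfolding descents_def by auto

lemma finite_descents [simp]: "finite (descents xs)"
  using descents_subset finite_subset by blast

lemma descents_Nil [simp]: "descents [] = {}"
  by (simp add: descents_def)

lemma card_descents_le: "card (descents xs) \<le> length xs"
  using card_mono[OF _ descents_subset, of xs] by simp

lemma card_descents_le_permutation:
  "xs \<in> permutations_of_set {1..N} \<Longrightarrow> card (descents xs) \<le> N"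
  using card_descents_le[of xs] length_finite_permutations_of_set[of xs "{1..N}"] by simp

lemma descents_append_max:
  assumes "\<forall>x\<in>set L. x < m" "\<forall>x\<in>set R. x < m"
  shows "descents (L @ m # R) = descents L \<union> (if R = [] then {} else {Suc (length L)})
           \<union> (\<lambda>i. i + Suc (length L)) ` descents R"
proof (intro set_eqI iffI)
  fix i assume "i \<in> descents (L @ m # R)"
  then have i: "1 \<le> i" "i < length L + Suc (length R)" "(L @ m # R) ! (i - 1) > (L @ m # R) ! i"
    unfolding descents_def by auto
  consider "i < length L" | "i = length L" | "i = Suc (length L)" | "i > Suc (length L)" by linarith
  then show "i \<in> descents L \<union> (if R = [] then {} else {Suc (length L)})
           \<union> (\<lambda>i. i + Suc (length L)) ` descents R"
  proof cases
    case 1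
    then have "i - 1 < length L" by simp
    then show ?thesis using i 1 by (auto simp: descents_def nth_append)
  next
    case 2
    then have "i - 1 < length L" using i by simp
    then have "L ! (i - 1) \<in> set L" by simp
    moreover have "(L @ m # R) ! (i - 1) = L ! (i - 1)" "(L @ m # R) ! i = m"
      using 2 \<open>i - 1 < length L\<close> by (auto simp: nth_append)
    ultimately show ?thesis using i assms by auto
  next
    case 4
    then have "i - Suc (length L) \<in> descents R" using i
      by (auto simp: descents_def nth_append nth_Cons' split: if_splits)
    then show ?thesis using 4 by (auto intro: image_eqI[of _ _ "i - Suc (length L)"])
  qed (use i in auto)
next
  fix i assume "i \<in> descents L \<union> (if R = [] then {} else {Suc (length L)})
           \<union> (\<lambda>i. i + Suc (length L)) ` descents R"
  then consider "i \<in> descents L" | "R \<noteq> []" "i = Suc (length L)"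
    | j where "j \<in> descents R" "i = j + Suc (length L)" by (auto split: if_splits)
  then show "i \<in> descents (L @ m # R)"
  proof cases
    case 2
    then have "R ! 0 \<in> set R" by simp
    then show ?thesis using 2 assms by (auto simp: descents_def nth_append)
  qed (auto simp: descents_def nth_append nth_Cons' split: if_splits)
qed

lemma card_descents_append_max:
  assumes "\<forall>x\<in>set L. x < m" "\<forall>x\<in>set R. x < m"
  shows "card (descents (L @ m # R)) = card (descents L) + (if R = [] then 0 else 1) + card (descents R)"
proof -
  let ?A = "descents L" and ?B = "if R = [] then {} else {Suc (length L)}"
    and ?C = "(\<lambda>i. i + Suc (length L)) ` descents R"
  have d1: "?A \<subseteq> {1..<length L}" by (rule descents_subset)
  have d2: "?C \<subseteq> {Suc (Suc (length L))..}"
    using descents_subset[of R] by auto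
  have "card (?A \<union> ?B \<union> ?C) = card (?A \<union> ?B) + card ?C"
    by (rule card_Un_disjoint) (use d1 d2 in \<open>auto split: if_splits\<close>)
  also have "card (?A \<union> ?B) = card ?A + card ?B"
    by (rule card_Un_disjoint) (use d1 in \<open>auto split: if_splits\<close>)
  finally have "card (?A \<union> ?B \<union> ?C) = card ?A + card ?B + card ?C" .
  moreover have "card ?C = card (descents R)"
    by (rule card_image) (auto intro: inj_onI)
  ultimately show ?thesis
    unfolding descents_append_max[OF assms] by simp
qed

lemma descents_map_strict_mono:
  assumes "strict_mono_on A f" "set xs \<subseteq> A"
  shows "descents (map f xs) = descents xs"
  unfolding descents_def using assms by (auto simp: strict_mono_on_less subset_iff)

text \<open>Descent statistics only see the relative order of the entries.\<close>
lemma sum_permutations_of_set_descents: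
  assumes "finite S"
  shows "(\<Sum>xs\<in>permutations_of_set S. w (descents xs))
       = (\<Sum>xs\<in>permutations_of_set {1..card S}. w (descents xs))"
proof -
  define ys where "ys = sorted_list_of_set S"
  define f where "f i = ys ! (i - 1)" for i
  have sorted: "sorted_wrt (<) ys" and len: "length ys = card S" and set: "set ys = S"
    using assms by (auto simp: ys_def)
  have mono: "strict_mono_on {1..card S} f"
    using sorted_wrt_nth_less[OF sorted] len by (auto intro!: strict_mono_onI simp: f_def)
  have inj: "inj_on f {1..card S}"
    using mono by (rule strict_mono_on_imp_inj_on)
  have "f ` {1..card S} = S"
  proof -
    have "f ` {1..card S} = (\<lambda>i. ys ! i) ` {..<length ys}"
    proof (intro set_eqI iffI)
      fix x assume "x \<in> (\<lambda>i. ys ! i) ` {..<length ys}"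
      then obtain i where "i < length ys" "x = ys ! i" by blast
      then show "x \<in> f ` {1..card S}"
        using len by (intro image_eqI[of _ _ "Suc i"]) (auto simp: f_def)
    qed (use len in \<open>auto simp: f_def\<close>)
    then show ?thesis using set by (auto simp: set_conv_nth)
  qed
  then have perms: "permutations_of_set S = map f ` permutations_of_set {1..card S}"
    using permutations_of_set_image_inj[OF inj] by simp
  have "inj_on (map f) (permutations_of_set {1..card S})"
    by (rule inj_on_subset[OF inj_on_map_lists[OF inj] permutations_of_set_lists])
  then have "(\<Sum>xs\<in>permutations_of_set S. w (descents xs))
      = (\<Sum>xs\<in>permutations_of_set {1..card S}. w (descents (map f xs)))"
    by (simp add: perms sum.reindex)
  also have "\<dots> = (\<Sum>xs\<in>permutations_of_set {1..card S}. w (descents xs))"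
    using descents_map_strict_mono[OF mono]
    by (intro sum.cong refl arg_cong[where f=w]) (auto simp: permutations_of_set_def)
  finally show ?thesis .
qed

lemma bij_betw_insert_max:
  "bij_betw (\<lambda>(S, L, R). L @ Suc n # R)
     (SIGMA S:Pow {1..n}. permutations_of_set S \<times> permutations_of_set ({1..n} - S))
     (permutations_of_set {1..Suc n})"
  (is "bij_betw ?g ?T _")
proof (rule bij_betwI')
  fix x y assume "x \<in> ?T" "y \<in> ?T"
  then obtain S L R S' L' R' where x: "x = (S, L, R)" and y: "y = (S', L', R')"
    and h: "S \<subseteq> {1..n}" "set L = S" "set R = {1..n} - S"
      "S' \<subseteq> {1..n}" "set L' = S'" "set R' = {1..n} - S'"
    by (auto simp: permutations_of_set_def)
  have max: "Suc n \<notin> set L" "Suc n \<notin> set R" using h by auto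
  show "(?g x = ?g y) = (x = y)"
  proof
    assume "?g x = ?g y"
    then have "L = L' \<and> R = R'" using append_Cons_eq_iff[OF max] by (simp add: x y)
    then show "x = y" using x y h by auto
  qed simp
next
  fix x assume "x \<in> ?T"
  then show "?g x \<in> permutations_of_set {1..Suc n}"
    by (auto simp: permutations_of_set_def)
next
  fix xs assume "xs \<in> permutations_of_set {1..Suc n}"
  then have set: "set xs = {1..Suc n}" and dist: "distinct xs"
    by (auto simp: permutations_of_set_def)
  then have "Suc n \<in> set xs" by simp
  then obtain L R where xs: "xs = L @ Suc n # R" by (meson split_list)
  have "insert (Suc n) (set L \<union> set R) = {1..Suc n}" "Suc n \<notin> set L \<union> set R"
    using set dist unfolding xs by auto
  then have "set L \<union> set R = {1..Suc n} - {Suc n}" by blast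
  also have "\<dots> = {1..n}" by auto
  finally have "set L \<union> set R = {1..n}" .
  moreover have "set L \<inter> set R = {}" "distinct L" "distinct R"
    using dist unfolding xs by auto
  ultimately have "(set L, L, R) \<in> ?T"
    by (auto simp: permutations_of_set_def)
  then show "\<exists>x\<in>?T. xs = ?g x" using xs by (intro bexI[of _ "(set L, L, R)"]) auto
qed

lemma sum_permutations_of_set_insert_max:
  "(\<Sum>xs\<in>permutations_of_set {1..Suc n}. F xs)
    = (\<Sum>S\<in>Pow {1..n}. \<Sum>L\<in>permutations_of_set S. \<Sum>R\<in>permutations_of_set ({1..n} - S).
          F (L @ Suc n # R))"
proof -
  have "(\<Sum>xs\<in>permutations_of_set {1..Suc n}. F xs)
      = (\<Sum>(S, L, R)\<in>(SIGMA S:Pow {1..n}. permutations_of_set S \<times> permutations_of_set ({1..n} - S)).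
          F (L @ Suc n # R))"
    using sum.reindex_bij_betw[OF bij_betw_insert_max, of F] by (simp add: case_prod_unfold)
  also have "\<dots> = (\<Sum>S\<in>Pow {1..n}. \<Sum>L\<in>permutations_of_set S. \<Sum>R\<in>permutations_of_set ({1..n} - S).
          F (L @ Suc n # R))"
    unfolding sum.cartesian_product by (subst sum.Sigma) (auto simp: case_prod_unfold)
  finally show ?thesis .
qed

lemma sum_Pow_card:
  fixes h :: "nat \<Rightarrow> 'a::semiring_1"
  assumes "finite A"
  shows "(\<Sum>S\<in>Pow A. h (card S)) = (\<Sum>j\<le>card A. of_nat (card A choose j) * h j)"
proof -
  have "(\<Sum>S\<in>Pow A. h (card S)) = (\<Sum>j\<le>card A. \<Sum>S\<in>{S\<in>Pow A. card S = j}. h (card S))"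
    by (rule sum.group[symmetric]) (use assms card_mono in auto)
  also have "\<dots> = (\<Sum>j\<le>card A. of_nat (card A choose j) * h j)"
  proof (rule sum.cong[OF refl])
    fix j
    have "(\<Sum>S\<in>{S\<in>Pow A. card S = j}. h (card S)) = of_nat (card {S. S \<subseteq> A \<and> card S = j}) * h j"
      by simp
    then show "(\<Sum>S\<in>{S\<in>Pow A. card S = j}. h (card S)) = of_nat (card A choose j) * h j"
      using n_subsets[OF assms] by simp
  qed
  finally show ?thesis .
qed

definition descent_sum :: "(nat set \<Rightarrow> 'a::comm_monoid_add) \<Rightarrow> nat \<Rightarrow> 'a" where
  "descent_sum w m = (\<Sum>xs\<in>permutations_of_set {1..m}. w (descents xs))"

lemma descent_sum_0 [simp]: "descent_sum w 0 = w {}"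
  by (simp add: descent_sum_def)

lemma descent_sum_blocks:
  fixes w :: "nat set \<Rightarrow> 'a::comm_semiring_1"
  assumes factor: "\<And>L R. \<forall>x\<in>set L. x < Suc n \<Longrightarrow> \<forall>x\<in>set R. x < Suc n \<Longrightarrow>
     w (descents (L @ Suc n # R)) = w (descents L) * c (length L) (length R) * w (descents R)"
    and S: "S \<subseteq> {1..n}"
  shows "(\<Sum>L\<in>permutations_of_set S. \<Sum>R\<in>permutations_of_set ({1..n} - S). w (descents (L @ Suc n # R)))
    = descent_sum w (card S) * c (card S) (n - card S) * descent_sum w (n - card S)"
proof -
  have fin: "finite S" using S finite_subset by blast
  have card: "card ({1..n} - S) = n - card S" using S by (simp add: card_Diff_subset fin)
  have "(\<Sum>L\<in>permutations_of_set S. \<Sum>R\<in>permutations_of_set ({1..n} - S). w (descents (L @ Suc n # R)))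
    = (\<Sum>L\<in>permutations_of_set S. \<Sum>R\<in>permutations_of_set ({1..n} - S).
        w (descents L) * c (card S) (n - card S) * w (descents R))"
  proof (intro sum.cong refl)
    fix L R assume L: "L \<in> permutations_of_set S" and R: "R \<in> permutations_of_set ({1..n} - S)"
    then have "length L = card S" "length R = n - card S"
      using card by (auto dest: length_finite_permutations_of_set)
    moreover have "\<forall>x\<in>set L. x < Suc n" "\<forall>x\<in>set R. x < Suc n"
      using L R S by (auto simp: permutations_of_set_def)
    ultimately show "w (descents (L @ Suc n # R)) = w (descents L) * c (card S) (n - card S) * w (descents R)"
      using factor by simp
  qed
  also have "\<dots> = (\<Sum>L\<in>permutations_of_set S. w (descents L)) * c (card S) (n - card S)
      * (\<Sum>R\<in>permutations_of_set ({1..n} - S). w (descents R))"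
    by (simp add: mult.assoc sum_distrib_left[symmetric] sum_distrib_right[symmetric])
  finally show ?thesis
    unfolding descent_sum_def using sum_permutations_of_set_descents[OF fin, of w]
      sum_permutations_of_set_descents[of "{1..n} - S" w] card by simp
qed

lemma descent_sum_Suc:
  fixes w :: "nat set \<Rightarrow> 'a::comm_semiring_1"
  assumes "\<And>L R. \<forall>x\<in>set L. x < Suc n \<Longrightarrow> \<forall>x\<in>set R. x < Suc n \<Longrightarrow>
     w (descents (L @ Suc n # R)) = w (descents L) * c (length L) (length R) * w (descents R)"
  shows "descent_sum w (Suc n)
    = (\<Sum>j\<le>n. of_nat (n choose j) * descent_sum w j * c j (n - j) * descent_sum w (n - j))"
proof -
  have "descent_sum w (Suc n) = (\<Sum>S\<in>Pow {1..n}.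
      descent_sum w (card S) * c (card S) (n - card S) * descent_sum w (n - card S))"
    unfolding descent_sum_def[of w "Suc n"] sum_permutations_of_set_insert_max
    by (rule sum.cong[OF refl], rule descent_sum_blocks[OF assms]) auto
  also have "\<dots> = (\<Sum>j\<le>n. of_nat (n choose j) * descent_sum w j * c j (n - j) * descent_sum w (n - j))"
    using sum_Pow_card[of "{1..n}" "\<lambda>j. descent_sum w j * c j (n - j) * descent_sum w (n - j)"]
    by (simp add: mult.assoc)
  finally show ?thesis .
qed

definition descent_weight :: "'a::monoid_mult \<Rightarrow> nat set \<Rightarrow> 'a" where
  "descent_weight t D = t ^ card D"

definition even_descent_weight :: "'a::semiring_1 \<Rightarrow> nat set \<Rightarrow> 'a" where
  "even_descent_weight s D = (if \<forall>i\<in>D. even i then s ^ card D else 0)"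

lemma descent_sum_descent_weight_Suc:
  fixes t :: "'a::comm_semiring_1"
  shows "descent_sum (descent_weight t) (Suc n) = (\<Sum>j\<le>n. of_nat (n choose j)
      * descent_sum (descent_weight t) j * (if n - j = 0 then 1 else t) * descent_sum (descent_weight t) (n - j))"
  by (rule descent_sum_Suc) (simp add: descent_weight_def card_descents_append_max power_add)

lemma descent_sum_even_descent_weight_Suc:
  fixes s :: "'a::comm_semiring_1"
  shows "descent_sum (even_descent_weight s) (Suc n) = (\<Sum>j\<le>n. of_nat (n choose j)
      * descent_sum (even_descent_weight s) j * (if n - j = 0 then 1 else if odd j then s else 0)
      * descent_sum (even_descent_weight s) (n - j))"
proof (rule descent_sum_Suc)
  fix L R :: "nat list"
  assume max: "\<forall>x\<in>set L. x < Suc n" "\<forall>x\<in>set R. x < Suc n"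
  have "(\<forall>i\<in>descents (L @ Suc n # R). even i) \<longleftrightarrow>
     (\<forall>i\<in>descents L. even i) \<and> (R \<noteq> [] \<longrightarrow> odd (length L) \<and> (\<forall>i\<in>descents R. even i))"
  proof (cases "R = [] \<or> even (length L)")
    case False
    then have shift: "even (Suc (i + length L)) \<longleftrightarrow> even i" for i by simp
    show ?thesis unfolding descents_append_max[OF max] using False by (auto simp: shift ball_Un)
  qed (auto simp: descents_append_max[OF max])
  then show "even_descent_weight s (descents (L @ Suc n # R)) = even_descent_weight s (descents L)
      * (if length R = 0 then 1 else if odd (length L) then s else 0) * even_descent_weight s (descents R)"
    unfolding even_descent_weight_def card_descents_append_max[OF max] by (auto simp: power_add)
qed

lemma descent_sum_descent_weight_eulerian:
  fixes t :: "'a::comm_semiring_1"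
  shows "descent_sum (descent_weight t) N = (\<Sum>k\<le>N. of_nat (eulerian N k) * t ^ k)"
proof -
  let ?P = "permutations_of_set {1..N}"
  have "descent_sum (descent_weight t) N
      = (\<Sum>k\<le>N. \<Sum>xs\<in>{xs\<in>?P. card (descents xs) = k}. descent_weight t (descents xs))"
    unfolding descent_sum_def
    by (rule sum.group[symmetric])
       (auto dest: card_descents_le_permutation[simplified])
  then show ?thesis by (simp add: descent_weight_def eulerian_def)
qed

lemma descent_sum_even_descent_weight_even_desc:
  fixes s :: "'a::comm_semiring_1"
  shows "descent_sum (even_descent_weight s) N = (\<Sum>k\<le>N. of_nat (even_desc N k) * s ^ k)"
proof -
  let ?Q = "{xs\<in>permutations_of_set {1..N}. \<forall>i\<in>descents xs. even i}"
  have "descent_sum (even_descent_weight s) N = (\<Sum>xs\<in>?Q. s ^ card (descents xs))"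
    unfolding descent_sum_def even_descent_weight_def by (simp add: sum.inter_filter[symmetric])
  also have "\<dots> = (\<Sum>k\<le>N. \<Sum>xs\<in>{xs\<in>?Q. card (descents xs) = k}. s ^ card (descents xs))"
    by (rule sum.group[symmetric])
       (auto dest: card_descents_le_permutation[simplified])
  finally show ?thesis by (simp add: even_desc_def conj_assoc)
qed

section \<open>Even and odd power series\<close>

definition fps_even :: "'a::zero fps \<Rightarrow> bool" where
  "fps_even F \<longleftrightarrow> (\<forall>n. odd n \<longrightarrow> F $ n = 0)"

definition fps_odd :: "'a::zero fps \<Rightarrow> bool" where
  "fps_odd F \<longleftrightarrow> (\<forall>n. even n \<longrightarrow> F $ n = 0)"

lemma odd_diff_iff: "i \<le> (n::nat) \<Longrightarrow> odd (n - i) \<longleftrightarrow> (odd n \<longleftrightarrow> even i)"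
  by (simp add: even_diff_nat) (metis even_add)

lemma fps_even_mult:
  fixes F G :: "'a::comm_semiring_1 fps"
  shows "fps_even F \<Longrightarrow> fps_even G \<Longrightarrow> fps_even (F * G)"
  unfolding fps_even_def fps_mult_nth
  by (intro allI impI sum.neutral ballI) (metis atLeastAtMost_iff mult_zero_left mult_zero_right odd_diff_iff)

lemma fps_odd_mult:
  fixes F G :: "'a::comm_semiring_1 fps"
  shows "fps_odd F \<Longrightarrow> fps_odd G \<Longrightarrow> fps_even (F * G)"
  unfolding fps_even_def fps_odd_def fps_mult_nth
  by (intro allI impI sum.neutral ballI) (metis atLeastAtMost_iff mult_zero_left mult_zero_right odd_diff_iff)

lemma fps_even_odd_mult:
  fixes F G :: "'a::comm_semiring_1 fps"
  shows "fps_even F \<Longrightarrow> fps_odd G \<Longrightarrow> fps_odd (F * G)"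
  unfolding fps_even_def fps_odd_def fps_mult_nth
  by (intro allI impI sum.neutral ballI) (metis atLeastAtMost_iff mult_zero_left mult_zero_right odd_diff_iff)

lemma fps_odd_even_mult:
  fixes F G :: "'a::comm_semiring_1 fps"
  shows "fps_odd F \<Longrightarrow> fps_even G \<Longrightarrow> fps_odd (F * G)"
  unfolding fps_even_def fps_odd_def fps_mult_nth
  by (intro allI impI sum.neutral ballI) (metis atLeastAtMost_iff mult_zero_left mult_zero_right odd_diff_iff)

lemma
  fixes F G :: "'a::ab_group_add fps"
  shows fps_even_add: "fps_even F \<Longrightarrow> fps_even G \<Longrightarrow> fps_even (F + G)"
  and fps_odd_add: "fps_odd F \<Longrightarrow> fps_odd G \<Longrightarrow> fps_odd (F + G)"
  and fps_even_diff: "fps_even F \<Longrightarrow> fps_even G \<Longrightarrow> fps_even (F - G)"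
  and fps_even_const: "fps_even (fps_const c)"
  and fps_even_1: "fps_even 1"
  by (auto simp: fps_even_def fps_odd_def)

lemma fps_even_deriv: "fps_even F \<Longrightarrow> fps_odd (fps_deriv F)"
  and fps_odd_deriv: "fps_odd F \<Longrightarrow> fps_even (fps_deriv F)"
  by (auto simp: fps_even_def fps_odd_def)

lemma fps_even_odd_eqD:
  fixes A B C D :: "'a::monoid_add fps"
  assumes "fps_even A" "fps_even C" "fps_odd B" "fps_odd D" "A + B = C + D"
  shows "A = C \<and> B = D"
proof -
  have "A $ n = C $ n \<and> B $ n = D $ n" for n
  proof -
    have "A $ n + B $ n = C $ n + D $ n" using assms(5) by (metis fps_add_nth)
    then show ?thesis using assms(1-4) unfolding fps_even_def fps_odd_def by (cases "even n") auto
  qed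
  then show ?thesis by (simp add: fps_eq_iff)
qed

definition fps_even_part :: "'a::zero fps \<Rightarrow> 'a fps" where
  "fps_even_part F = Abs_fps (\<lambda>n. if even n then F $ n else 0)"

definition fps_odd_part :: "'a::zero fps \<Rightarrow> 'a fps" where
  "fps_odd_part F = Abs_fps (\<lambda>n. if odd n then F $ n else 0)"

lemma fps_even_fps_even_part: "fps_even (fps_even_part F)"
  and fps_odd_fps_odd_part: "fps_odd (fps_odd_part F)"
  and fps_odd_part_plus_even_part: "fps_odd_part G + fps_even_part G = (G :: 'a::monoid_add fps)"
  by (auto simp: fps_even_def fps_odd_def fps_even_part_def fps_odd_part_def fps_eq_iff)

text \<open>Differentiation swaps the two parities, so the equation splits into its even and odd parts.\<close>
lemma fps_deriv_odd_even_parts: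
  fixes P E :: "'a::comm_ring_1 fps"
  assumes "fps_odd P" "fps_even E" "fps_even a" "fps_even b"
    and "fps_deriv (P + E) = a * P * (P + E - 1) + b * P + E"
  shows "fps_deriv P = a * P * P + E \<and> fps_deriv E = a * P * (E - 1) + b * P"
proof (rule fps_even_odd_eqD)
  show "fps_deriv P + fps_deriv E = a * P * P + E + (a * P * (E - 1) + b * P)"
    using assms(5) by (simp add: algebra_simps)
qed (use assms(1-4) in \<open>auto intro: fps_odd_deriv fps_even_deriv fps_even_add fps_odd_add
      fps_even_mult fps_odd_mult fps_even_odd_mult fps_odd_even_mult fps_even_diff fps_even_1\<close>)

lemma fps_riccati_unique:
  fixes A B :: "'a::field_char_0 fps"
  assumes "fps_deriv A = c * A * A + d * A" "fps_deriv B = c * B * B + d * B"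
    and "A $ 0 = B $ 0"
  shows "A = B"
proof -
  have "\<forall>m\<le>n. A $ m = B $ m" for n
  proof (induction n)
    case (Suc n)
    have "(A * A) $ n = (B * B) $ n" "(c * A) $ n = (c * B) $ n" "(d * A) $ n = (d * B) $ n"
      unfolding fps_mult_nth by (auto intro!: sum.cong simp: Suc)
    then have "fps_deriv A $ n = fps_deriv B $ n"
      using Suc by (simp add: assms(1,2) mult.assoc fps_mult_nth del: fps_deriv_nth)
    then show ?case using Suc by (auto simp: le_Suc_eq simp del: of_nat_Suc)
  qed (use assms(3) in simp)
  then show ?thesis by (intro fps_ext) auto
qed

lemma fps_deriv_eq_mult_imp_eq_0:
  fixes J K :: "'a::field_char_0 fps"
  assumes "fps_deriv J = K * J" "J $ 0 = 0"
  shows "J = 0"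
proof -
  have "\<forall>m\<le>n. J $ m = 0" for n
  proof (induction n)
    case (Suc n)
    have "(K * J) $ n = 0" unfolding fps_mult_nth
      by (intro sum.neutral) (use Suc in auto)
    then have "fps_deriv J $ n = 0" using assms(1) by simp
    then have "J $ Suc n = 0" by (simp del: of_nat_Suc)
    then show ?case using Suc by (auto simp: le_Suc_eq)
  qed (use assms(2) in simp)
  then show ?thesis by (intro fps_ext) auto
qed

section \<open>Exponential generating functions of the descent polynomials\<close>

definition egf :: "(nat \<Rightarrow> 'a::field_char_0) \<Rightarrow> 'a fps" where
  "egf u = Abs_fps (\<lambda>n. u n / fact n)"

lemma egf_nth [simp]: "egf u $ n = u n / fact n"
  by (simp add: egf_def)

lemma fps_deriv_egf: "fps_deriv (egf u) = egf (\<lambda>n. u (Suc n))"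
  by (simp add: fps_eq_iff field_simps del: of_nat_Suc)

lemma egf_mult: "egf a * egf b = egf (\<lambda>m. \<Sum>j\<le>m. of_nat (m choose j) * a j * b (m - j))"
proof (rule fps_ext)
  fix m
  have "(egf a * egf b) $ m = (\<Sum>j\<le>m. a j / fact j * (b (m - j) / fact (m - j)))"
    by (simp add: fps_mult_nth atLeast0AtMost)
  also have "\<dots> = (\<Sum>j\<le>m. of_nat (m choose j) * a j * b (m - j)) / fact m"
    unfolding sum_divide_distrib by (intro sum.cong refl) (simp add: binomial_fact field_simps)
  finally show "(egf a * egf b) $ m = egf (\<lambda>m. \<Sum>j\<le>m. of_nat (m choose j) * a j * b (m - j)) $ m"
    by simp
qed

lemma fps_deriv_egf_eulerian_recurrence:
  fixes t :: "'a::field_char_0"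
  assumes u0: "u 0 = 1"
    and urec: "\<And>m. u (Suc m) = (\<Sum>j\<le>m. of_nat (m choose j) * u j * (if m - j = 0 then 1 else t) * u (m - j))"
  shows "fps_deriv (egf u) = fps_const t * egf u * egf u + fps_const (1 - t) * egf u"
proof -
  have "u (Suc m) = t * (\<Sum>j\<le>m. of_nat (m choose j) * u j * u (m - j)) + (1 - t) * u m" for m
  proof -
    have "(\<Sum>j\<le>m. of_nat (m choose j) * u j * (if m - j = 0 then 1 else t) * u (m - j))
        = (\<Sum>j\<le>m. t * (of_nat (m choose j) * u j * u (m - j)) + (if j = m then (1 - t) * u m else 0))"
      by (intro sum.cong refl) (auto simp: u0 algebra_simps)
    then show ?thesis by (simp add: urec sum.distrib sum_distrib_left)
  qed
  then show ?thesis
    by (simp add: fps_deriv_egf mult.assoc egf_mult fps_eq_iff add_divide_distrib)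
qed

text \<open>Rescaling the n-th term by q^(n div 2) turns the weight s of a block boundary after
  an odd position into q s.\<close>
lemma scaled_even_descent_recurrence:
  fixes q s :: "'a::comm_semiring_1"
  assumes v0: "v 0 = 1"
    and vrec: "\<And>m. v (Suc m) = (\<Sum>j\<le>m. of_nat (m choose j) * v j
        * (if m - j = 0 then 1 else if odd j then s else 0) * v (m - j))"
    and w: "\<And>n. w n = q ^ (n div 2) * v n"
  shows "w (Suc m)
      = q * s * (\<Sum>j\<le>m. of_nat (m choose j) * (if odd j \<and> j \<noteq> m then w j * w (m - j) else 0))
      + (if odd m then q else 1) * w m"
proof -
  have "w (Suc m)
      = (\<Sum>j\<le>m. q * s * (of_nat (m choose j) * (if odd j \<and> j \<noteq> m then w j * w (m - j) else 0))
      + (if j = m then (if odd m then q else 1) * w m else 0))"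
    unfolding w vrec sum_distrib_left
  proof (intro sum.cong refl)
    fix j assume "j \<in> {..m}"
    then consider "j = m" | "j < m" "even j" | "j < m" "odd j" by fastforce
    then show "q ^ (Suc m div 2) * (of_nat (m choose j) * v j
          * (if m - j = 0 then 1 else if odd j then s else 0) * v (m - j))
        = q * s * (of_nat (m choose j) * (if odd j \<and> j \<noteq> m
            then q ^ (j div 2) * v j * (q ^ ((m - j) div 2) * v (m - j)) else 0))
          + (if j = m then (if odd m then q else 1) * (q ^ (m div 2) * v m) else 0)"
    proof cases
      case 1
      then show ?thesis by (auto simp: v0 mult.assoc elim!: oddE)
    next
      case 3
      then have "Suc m div 2 = Suc (j div 2 + (m - j) div 2)"
        by (auto elim!: oddE)
      then show ?thesis using 3 by (simp add: power_add algebra_simps)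
    qed simp
  qed
  then show ?thesis by (simp add: sum.distrib sum_distrib_left)
qed

lemma fps_deriv_egf_scaled_recurrence:
  fixes c q :: "'a::field_char_0"
  assumes w0: "w 0 = 1"
    and wrec: "\<And>m. w (Suc m)
      = c * (\<Sum>j\<le>m. of_nat (m choose j) * (if odd j \<and> j \<noteq> m then w j * w (m - j) else 0))
      + (if odd m then q else 1) * w m"
  shows "fps_deriv (egf w) = fps_const c * fps_odd_part (egf w) * (egf w - 1)
      + fps_const q * fps_odd_part (egf w) + fps_even_part (egf w)"
proof -
  have P: "fps_odd_part (egf w) = egf (\<lambda>n. if odd n then w n else 0)"
    and E: "fps_even_part (egf w) = egf (\<lambda>n. if even n then w n else 0)"
    and W1: "egf w - 1 = egf (\<lambda>n. w n - (if n = 0 then 1 else 0))"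
    by (auto simp: fps_eq_iff fps_odd_part_def fps_even_part_def)
  have "(\<Sum>j\<le>m. of_nat (m choose j) * (if odd j then w j else 0) * (w (m - j) - (if m - j = 0 then 1 else 0)))
      = (\<Sum>j\<le>m. of_nat (m choose j) * (if odd j \<and> j \<noteq> m then w j * w (m - j) else 0))" for m
    by (intro sum.cong refl) (auto simp: w0)
  then show ?thesis
    by (simp add: P E W1 mult.assoc egf_mult fps_deriv_egf wrec fps_eq_iff add_divide_distrib)
qed

text \<open>A first integral: the derivative of the left-hand side is 4 t P times itself.\<close>
lemma odd_even_system_invariant:
  fixes t :: "'a::field_char_0" and P E :: "'a fps"
  assumes dP: "fps_deriv P = fps_const (2 * t) * P * P + E"
    and dE: "fps_deriv E = fps_const (2 * t) * P * (E - 1) + fps_const (1 + t^2) * P"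
    and P0: "P $ 0 = 0" and E0: "E $ 0 = 1"
  shows "fps_const ((1 + t^2)^2) * P * P - fps_const ((1 + t)^2) * (E - 1) * (E - 1)
      - fps_const (2 * (1 + t^2)) * (E - 1) = 0" (is "?K = 0")
proof (rule fps_deriv_eq_mult_imp_eq_0)
  define T where "T = fps_const t"
  have const_eqs: "fps_const (2 * t) = 2 * T" "fps_const (1 + t^2) = 1 + T * T"
    "fps_const ((1 + t^2)^2) = (1 + T * T) * (1 + T * T)" "fps_const ((1 + t)^2) = (1 + T) * (1 + T)"
    "fps_const (2 * (1 + t^2)) = 2 * (1 + T * T)" "fps_const (4 * t) = 4 * T"
    by (simp_all add: fps_eq_iff T_def power2_eq_square field_simps fps_numeral_nth)
  show "fps_deriv ?K = fps_const (4 * t) * P * ?K"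
    by (simp only: fps_deriv_mult fps_deriv_add fps_deriv_sub fps_deriv_const fps_deriv_1 dP dE,
        simp only: const_eqs) algebra
  show "?K $ 0 = 0" by (simp add: P0 E0)
qed

lemma riccati_of_odd_even_system:
  fixes t :: "'a::field_char_0" and P E :: "'a fps"
  assumes q: "1 + t^2 \<noteq> 0"
    and dP: "fps_deriv P = fps_const (2 * t) * P * P + E"
    and dE: "fps_deriv E = fps_const (2 * t) * P * (E - 1) + fps_const (1 + t^2) * P"
    and P0: "P $ 0 = 0" and E0: "E $ 0 = 1"
  defines "X \<equiv> 1 + fps_const ((1 + t) / (1 + t^2)) * (E - 1) + P"
  shows "fps_deriv X = fps_const t * X * X + fps_const (1 - t) * X"
proof -
  define T where "T = fps_const t"
  define Q where "Q = fps_const (1 / (1 + t^2))"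
  have const_eqs: "fps_const (2 * t) = 2 * T" "fps_const (1 + t^2) = 1 + T * T"
    "fps_const ((1 + t^2)^2) = (1 + T * T) * (1 + T * T)" "fps_const ((1 + t)^2) = (1 + T) * (1 + T)"
    "fps_const (2 * (1 + t^2)) = 2 * (1 + T * T)" "fps_const (1 - t) = 1 - T"
    "fps_const ((1 + t) / (1 + t^2)) = (1 + T) * Q" "Q * (1 + T * T) = 1"
    using q by (simp_all add: fps_eq_iff T_def Q_def power2_eq_square field_simps fps_numeral_nth)
  have "(1 + T * T) * (1 + T * T) * P * P - (1 + T) * (1 + T) * (E - 1) * (E - 1)
      - 2 * (1 + T * T) * (E - 1) = 0"
    using odd_even_system_invariant[OF dP dE P0 E0] unfolding const_eqs .
  then show ?thesis
    unfolding X_def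
    by (simp only: fps_deriv_mult fps_deriv_add fps_deriv_sub fps_deriv_const fps_deriv_1 dP dE,
        simp only: const_eqs T_def[symmetric]) (use const_eqs(8) in algebra)
qed

lemma eulerian_even_descent_recurrences_relation:
  fixes t :: real and u v :: "nat \<Rightarrow> real"
  assumes u0: "u 0 = 1"
    and urec: "\<And>m. u (Suc m) = (\<Sum>j\<le>m. of_nat (m choose j) * u j * (if m - j = 0 then 1 else t) * u (m - j))"
    and v0: "v 0 = 1"
    and vrec: "\<And>m. v (Suc m) = (\<Sum>j\<le>m. of_nat (m choose j) * v j
        * (if m - j = 0 then 1 else if odd j then 2 * t / (1 + t^2) else 0) * v (m - j))"
  shows "u (2*n+1) = (1 + t^2)^n * v (2*n+1) \<and> u (2*n+2) = (1 + t) * (1 + t^2)^n * v (2*n+2)"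
proof -
  define q where "q = 1 + t^2"
  have q: "q \<noteq> 0"
    unfolding q_def by (metis add_pos_nonneg zero_less_one zero_le_power2 less_irrefl)
  define w where "w n = q ^ (n div 2) * v n" for n
  define P where "P = fps_odd_part (egf w)"
  define E where "E = fps_even_part (egf w)"
  define X where "X = 1 + fps_const ((1 + t) / q) * (E - 1) + P"
  have "w (Suc m) = 2 * t * (\<Sum>j\<le>m. of_nat (m choose j) * (if odd j \<and> j \<noteq> m then w j * w (m - j) else 0))
      + (if odd m then q else 1) * w m" for m
    using scaled_even_descent_recurrence[OF v0 vrec w_def, of m] q by (simp add: q_def)
  then have "fps_deriv (egf w) = fps_const (2 * t) * P * (egf w - 1) + fps_const q * P + E"
    unfolding P_def E_def by (intro fps_deriv_egf_scaled_recurrence) (simp_all add: w_def v0)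
  moreover have "egf w = P + E"
    unfolding P_def E_def by (simp add: fps_odd_part_plus_even_part)
  moreover have "fps_odd P" "fps_even E"
    unfolding P_def E_def by (rule fps_odd_fps_odd_part fps_even_fps_even_part)+
  ultimately have "fps_deriv P = fps_const (2 * t) * P * P + E
      \<and> fps_deriv E = fps_const (2 * t) * P * (E - 1) + fps_const q * P"
    by (intro fps_deriv_odd_even_parts) (simp_all add: fps_even_const)
  moreover have "P $ 0 = 0" "E $ 0 = 1"
    by (simp_all add: P_def E_def fps_odd_part_def fps_even_part_def w_def v0)
  ultimately have "fps_deriv X = fps_const t * X * X + fps_const (1 - t) * X"
    using riccati_of_odd_even_system[of t P E] q by (simp add: X_def q_def)
  then have "egf u = X"
    by (rule fps_riccati_unique[OF fps_deriv_egf_eulerian_recurrence[OF u0 urec]])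
       (simp add: X_def u0 \<open>P $ 0 = 0\<close> \<open>E $ 0 = 1\<close>)
  then have "egf u $ (2*n+1) = X $ (2*n+1)" "egf u $ (2*n+2) = X $ (2*n+2)"
    by simp_all
  then have "u (2*n+1) = q^n * v (2*n+1)" "u (2*n+2) = (1 + t) / q * (q^(n+1) * v (2*n+2))"
    by (simp_all add: X_def P_def E_def fps_odd_part_def fps_even_part_def w_def)
  then show ?thesis using q by (simp add: q_def)
qed

lemma descent_sum_descent_weight_eq:
  fixes t :: real
  shows "descent_sum (descent_weight t) (2*n+1)
      = (1 + t^2)^n * descent_sum (even_descent_weight (2 * t / (1 + t^2))) (2*n+1)"
    and "descent_sum (descent_weight t) (2*n+2)
      = (1 + t) * ((1 + t^2)^n * descent_sum (even_descent_weight (2 * t / (1 + t^2))) (2*n+2))"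
  using eulerian_even_descent_recurrences_relation[of "descent_sum (descent_weight t)" t
      "descent_sum (even_descent_weight (2 * t / (1 + t^2)))" n]
  by (simp_all add: descent_weight_def even_descent_weight_def descent_sum_descent_weight_Suc
      descent_sum_even_descent_weight_Suc)

section \<open>Inverting the expansion in powers of 1 + t^2\<close>

lemma alternating_binomial_vandermonde:
  "(\<Sum>i\<le>l. (-1)^i * real (M + i choose i) * real (M + 1 + K choose (l - i))) = real (K choose l)"
proof -
  have "(\<Sum>i\<le>l. (-1)^i * real (M + i choose i) * real (M + 1 + K choose (l - i)))
      = (\<Sum>i=0..l. ((- (real M + 1)) gchoose i) * ((real M + 1 + real K) gchoose (l - i)))"
  proof (rule sum.cong)
    fix i assume "i \<in> {0..l}"
    have "((- (real M + 1)) gchoose i) = (-1)^i * ((real M + 1 + of_nat i - 1) gchoose i)"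
      by (rule gbinomial_minus)
    also have "real M + 1 + of_nat i - 1 = real (M + i)" by simp
    finally have a: "((- (real M + 1)) gchoose i) = (-1)^i * real (M + i choose i)"
      by (simp add: binomial_gbinomial)
    have "real (M + 1 + K choose (l - i)) = (real (M + 1 + K) gchoose (l - i))"
      by (rule binomial_gbinomial)
    also have "real (M + 1 + K) = real M + 1 + real K" by simp
    finally have b: "((real M + 1 + real K) gchoose (l - i)) = real (M + 1 + K choose (l - i))" by simp
    show "(-1)^i * real (M + i choose i) * real (M + 1 + K choose (l - i)) =
      ((- (real M + 1)) gchoose i) * ((real M + 1 + real K) gchoose (l - i))" by (simp only: a b mult.assoc)
  qed (auto simp: atLeast0AtMost)
  also have "\<dots> = ((- (real M + 1)) + (real M + 1 + real K)) gchoose l"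
    by (rule gbinomial_Vandermonde)
  also have "\<dots> = real (K choose l)" by (simp add: binomial_gbinomial)
  finally show ?thesis .
qed

lemma coef_eq_binomial_sum:
  "coef M i = real (M + i choose i) + (if i = 0 then 0 else real (M + i - 1 choose (i - 1)))"
proof (cases "M + i = 0")
  case True then show ?thesis by (simp add: coef_def)
next
  case False
  show ?thesis
  proof (cases "i = 0")
    case True then show ?thesis using False by (simp add: coef_def)
  next
    case i: False
    have h: "real i * real (M + i choose i) = real (M + i) * real (M + i - 1 choose (i - 1))"
      using times_binomial_minus1_eq[of i "M + i"] i by (metis of_nat_mult gr0I)
    have nz: "real (M + i) \<noteq> 0" using False by (simp del: of_nat_add)
    have "real (M + i - 1 choose (i - 1)) = real i * real (M + i choose i) / real (M + i)"
      unfolding h using nz by (simp del: of_nat_add)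
    then show ?thesis using False i unfolding coef_def by (simp add: field_simps)
  qed
qed

text \<open>By coef_eq_binomial_sum both halves are alternating Vandermonde sums, and for l > 0 they
  cancel: C(2l-1, l) - C(2l-1, l-1) = 0.\<close>
lemma sum_coef_binomial:
  "(\<Sum>i\<le>l. (-1)^i * coef M i * real (M + 2*l choose (l - i))) = (if l = 0 then 1 else 0)"
proof (cases "l = 0")
  case True then show ?thesis by (simp add: coef_def)
next
  case False
  then obtain l' where l: "l = Suc l'" by (cases l) auto
  have s1: "(\<Sum>i\<le>l. (-1)^i * real (M + i choose i) * real (M + 2*l choose (l - i))) = real (2*l' + 1 choose l)"
    using alternating_binomial_vandermonde[where l=l and M=M and K="2*l'+1"] l by (simp add: algebra_simps)
  have "(\<Sum>i\<le>l. (-1)^i * (if i = 0 then 0 else real (M + i - 1 choose (i - 1))) * real (M + 2*l choose (l - i)))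
      = (\<Sum>i\<le>l'. (-1)^(Suc i) * real (M + i choose i) * real (M + 2*l choose (l' - i)))"
    unfolding l atMost_Suc_eq_insert_0 by (simp add: sum.reindex)
  also have "\<dots> = - (\<Sum>i\<le>l'. (-1)^i * real (M + i choose i) * real (M + 1 + (2*l'+1) choose (l' - i)))"
    by (simp add: sum_negf[symmetric] l algebra_simps)
  also have "\<dots> = - real (2*l' + 1 choose l')" by (simp only: alternating_binomial_vandermonde)
  finally have s2: "(\<Sum>i\<le>l. (-1)^i * (if i = 0 then 0 else real (M + i - 1 choose (i - 1))) * real (M + 2*l choose (l - i)))
      = - real (2*l' + 1 choose l')" .
  have sym: "(2*l' + 1 choose l) = (2*l'+1 choose l')"
    using binomial_symmetric[of l' "2*l'+1"] l by simp
  have "(\<Sum>i\<le>l. (-1)^i * coef M i * real (M + 2*l choose (l - i)))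
     = (\<Sum>i\<le>l. (-1)^i * real (M + i choose i) * real (M + 2*l choose (l - i)))
     + (\<Sum>i\<le>l. (-1)^i * (if i = 0 then 0 else real (M + i - 1 choose (i - 1))) * real (M + 2*l choose (l - i)))"
    unfolding coef_eq_binomial_sum by (simp add: sum.distrib[symmetric] algebra_simps)
  then show ?thesis using s1 s2 sym False by simp
qed

definition expansion_coeff :: "(nat \<Rightarrow> real) \<Rightarrow> nat \<Rightarrow> nat \<Rightarrow> real" where
  "expansion_coeff b n m = (\<Sum>k\<le>n. \<Sum>j\<le>n. if k + 2*j = m then b k * real (n - k choose j) else 0)"

lemma sum_expansion_coeff:
  fixes b :: "nat \<Rightarrow> real" and t :: real
  assumes M: "2*n \<le> M"
  shows "(\<Sum>k\<le>n. b k * t^k * (1+t^2)^(n-k)) = (\<Sum>m\<le>M. expansion_coeff b n m * t^m)"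
proof -
  have bin: "(1+t^2)^(n-k) = (\<Sum>j\<le>n. real (n - k choose j) * t^(2*j))" if "k \<le> n" for k
  proof -
    have "(1+t^2)^(n-k) = (t^2 + 1)^(n-k)" by (simp add: add.commute)
    also have "\<dots> = (\<Sum>j\<le>n-k. real (n - k choose j) * t^(2*j))"
      by (subst binomial_ring) (simp add: power_mult)
    also have "\<dots> = (\<Sum>j\<le>n. real (n - k choose j) * t^(2*j))"
      by (rule sum.mono_neutral_left) auto
    finally show ?thesis .
  qed
  have "(\<Sum>k\<le>n. b k * t^k * (1+t^2)^(n-k)) = (\<Sum>k\<le>n. \<Sum>j\<le>n. b k * real (n - k choose j) * t^(k + 2*j))"
    by (intro sum.cong refl) (simp add: bin sum_distrib_left power_add mult_ac)
  also have "\<dots> = (\<Sum>k\<le>n. \<Sum>j\<le>n. \<Sum>m\<le>M. (if k + 2*j = m then b k * real (n - k choose j) else 0) * t^m)"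
  proof (intro sum.cong refl)
    fix k j assume k: "k \<in> {..n}" and j: "j \<in> {..n}"
    have "(\<Sum>m\<le>M. (if k + 2*j = m then b k * real (n - k choose j) else 0) * t^m)
        = (\<Sum>m\<le>M. if k + 2*j = m then b k * real (n - k choose j) * t^m else 0)"
      by (intro sum.cong refl) auto
    also have "\<dots> = (if k + 2*j \<in> {..M} then b k * real (n - k choose j) * t^(k+2*j) else 0)"
      by (rule sum.delta') simp
    also have "\<dots> = b k * real (n - k choose j) * t^(k+2*j)"
    proof (cases "k + 2*j \<le> M")
      case False then have "n - k < j" using M k by auto
      then show ?thesis using False by simp
    qed simp
    finally show "b k * real (n - k choose j) * t^(k + 2*j) =
       (\<Sum>m\<le>M. (if k + 2*j = m then b k * real (n - k choose j) else 0) * t^m)" by simp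
  qed
  also have "\<dots> = (\<Sum>m\<le>M. expansion_coeff b n m * t^m)"
    unfolding expansion_coeff_def sum_distrib_right
    by (subst sum.swap) (subst (2) sum.swap, rule refl)
  finally show ?thesis .
qed

lemma sum_coef_expansion_kernel:
  assumes k: "k \<le> n"
  shows "(\<Sum>i = 0..k div 2. \<Sum>j\<le>n. if k' + 2*j = k - 2*i
      then (-1)^i * coef (n - k) i * real (n - k' choose j) else 0) = (if k' = k then 1 else 0)"
proof (cases "k' \<le> k \<and> even (k - k')")
  case False
  have "k' + 2*j \<noteq> k - 2*i" if "2*i \<le> k" for i j
  proof
    assume "k' + 2*j = k - 2*i"
    then have "k' \<le> k" "k - k' = 2*(i+j)" using that by auto
    then show False using False by auto
  qed
  then have "(\<Sum>i = 0..k div 2. \<Sum>j\<le>n. if k' + 2*j = k - 2*i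
      then (-1)^i * coef (n - k) i * real (n - k' choose j) else 0) = 0"
    by (intro sum.neutral ballI) auto
  then show ?thesis using False by auto
next
  case True
  then obtain l where l: "k = k' + 2*l" by (metis dvd_def le_add_diff_inverse evenE)
  have "(\<Sum>j\<le>n. if k' + 2*j = k - 2*i then (-1)^i * coef (n - k) i * real (n - k' choose j) else 0)
      = (if i \<le> l then (-1)^i * coef (n - k) i * real (n - k' choose (l - i)) else 0)"
    if "i \<in> {0..k div 2}" for i
  proof -
    have "(\<Sum>j\<le>n. if k' + 2*j = k - 2*i then (-1)^i * coef (n - k) i * real (n - k' choose j) else 0)
       = (\<Sum>j\<le>n. if (if i \<le> l then l - i else Suc n) = j
           then (-1)^i * coef (n - k) i * real (n - k' choose j) else 0)"
      by (intro sum.cong refl) (use l that in auto)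
    then show ?thesis using l k by (subst (asm) sum.delta') auto
  qed
  then have "(\<Sum>i = 0..k div 2. \<Sum>j\<le>n. if k' + 2*j = k - 2*i
      then (-1)^i * coef (n - k) i * real (n - k' choose j) else 0)
      = (\<Sum>i = 0..k div 2. if i \<le> l then (-1)^i * coef (n - k) i * real (n - k' choose (l - i)) else 0)"
    by (rule sum.cong[OF refl])
  also have "\<dots> = (\<Sum>i\<in>{0..k div 2} \<inter> {..l}. (-1)^i * coef (n - k) i * real (n - k' choose (l - i)))"
    by (simp only: sum.inter_restrict[OF finite_atLeastAtMost] atMost_iff)
  also have "{0..k div 2} \<inter> {..l} = {..l}" using l by auto
  also have "n - k' = (n - k) + 2*l" using l k by simp
  moreover have "k' = k \<longleftrightarrow> l = 0" using l by auto
  ultimately show ?thesis using sum_coef_binomial[where l=l and M="n - k"] by simp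
qed

lemma expansion_coeff_inversion:
  assumes k: "k \<le> n"
  shows "b k = (\<Sum>i = 0..k div 2. (-1)^i * coef (n - k) i * expansion_coeff b n (k - 2*i))"
proof -
  have "(\<Sum>i = 0..k div 2. (-1)^i * coef (n - k) i * expansion_coeff b n (k - 2*i))
      = (\<Sum>k'\<le>n. b k' * (\<Sum>i = 0..k div 2. \<Sum>j\<le>n.
          if k' + 2*j = k - 2*i then (-1)^i * coef (n - k) i * real (n - k' choose j) else 0))"
    unfolding expansion_coeff_def sum_distrib_left
    by (subst sum.swap) (intro sum.cong refl, auto simp: mult_ac)
  also have "\<dots> = (\<Sum>k'\<le>n. if k' = k then b k' else 0)"
    by (simp add: sum_coef_expansion_kernel[OF k] if_distrib cong: if_cong)
  also have "\<dots> = b k" using k by (simp add: sum.delta)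
  finally show ?thesis by simp
qed

lemma expansion_coeff_unique:
  assumes "2*n \<le> M" "m \<le> M"
    and "\<And>t. (\<Sum>m\<le>M. a m * t^m) = (\<Sum>k\<le>n. b k * t^k * (1 + t^2)^(n - k))"
  shows "a m = expansion_coeff b n m"
  using assms polyfun_eq_coeffs[of a M "expansion_coeff b n"] sum_expansion_coeff[OF assms(1)] by simp

section \<open>The coefficient formulas\<close>

lemma card_descents_even_le:
  assumes xs: "xs \<in> permutations_of_set {1..N}" and even: "\<forall>i\<in>descents xs. even i"
    and N: "N \<le> 2*n+2"
  shows "card (descents xs) \<le> n"
proof -
  have "descents xs \<subseteq> (\<lambda>j. 2*j) ` {1..n}"
  proof
    fix i assume "i \<in> descents xs"
    then have "1 \<le> i" "i < N" "even i"
      using descents_subset[of xs] length_finite_permutations_of_set[OF xs] even by auto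
    then show "i \<in> (\<lambda>j. 2*j) ` {1..n}" using N by (intro image_eqI[of _ _ "i div 2"]) auto
  qed
  then have "card (descents xs) \<le> card ((\<lambda>j. 2*j) ` {1..n})" by (intro card_mono) auto
  also have "\<dots> \<le> n" using card_image_le[of "{1..n}" "\<lambda>j. 2*j"] by simp
  finally show ?thesis .
qed

lemma even_desc_eq_0: "N \<le> 2*n+2 \<Longrightarrow> n < k \<Longrightarrow> even_desc N k = 0"
  unfolding even_desc_def using card_descents_even_le by fastforce

lemma sum_powers_homogenize:
  fixes a :: "nat \<Rightarrow> real" and t :: real
  assumes z: "\<And>k. n < k \<Longrightarrow> a k = 0" and nN: "n \<le> N"
  shows "(1+t^2)^n * (\<Sum>k\<le>N. a k * (2*t/(1+t^2))^k) = (\<Sum>k\<le>n. (2^k * a k) * t^k * (1+t^2)^(n-k))"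
proof -
  have q0: "(1+t^2) \<noteq> 0" by (metis add_pos_nonneg zero_less_one zero_le_power2 less_irrefl)
  have "(\<Sum>k\<le>N. a k * (2*t/(1+t^2))^k) = (\<Sum>k\<le>n. a k * (2*t/(1+t^2))^k)"
    by (rule sum.mono_neutral_right) (use z nN in auto)
  then have "(1+t^2)^n * (\<Sum>k\<le>N. a k * (2*t/(1+t^2))^k) = (\<Sum>k\<le>n. (1+t^2)^n * (a k * (2*t/(1+t^2))^k))"
    by (simp add: sum_distrib_left)
  also have "\<dots> = (\<Sum>k\<le>n. (2^k * a k) * t^k * (1+t^2)^(n-k))"
  proof (intro sum.cong refl)
    fix k assume "k \<in> {..n}"
    then have "(1+t^2)^n = (1+t^2)^k * (1+t^2)^(n-k)" by (simp add: power_add[symmetric])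
    then show "(1+t^2)^n * (a k * (2*t/(1+t^2))^k) = (2^k * a k) * t^k * (1+t^2)^(n-k)"
      using q0 by (simp add: power_divide power_mult_distrib field_simps)
  qed
  finally show ?thesis .
qed

lemma eulerian_polynomial_odd:
  "(\<Sum>m\<le>2*n+1. real (eulerian (2*n+1) m) * t^m) =
   (\<Sum>k\<le>n. (2^k * real (even_desc (2*n+1) k)) * t^k * (1 + t^2)^(n-k))"
  unfolding descent_sum_descent_weight_eulerian[symmetric] descent_sum_descent_weight_eq
    descent_sum_even_descent_weight_even_desc
  by (rule sum_powers_homogenize) (use even_desc_eq_0[of _ n] in auto)

lemma eulerian_polynomial_even:
  "(\<Sum>m\<le>2*n+2. real (eulerian (2*n+2) m) * t^m) =
   (1 + t) * (\<Sum>k\<le>n. (2^k * real (even_desc (2*n+2) k)) * t^k * (1 + t^2)^(n-k))"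
  unfolding descent_sum_descent_weight_eulerian[symmetric] descent_sum_descent_weight_eq
    descent_sum_even_descent_weight_even_desc
  by (subst sum_powers_homogenize) (use even_desc_eq_0[of _ n] in auto)

lemma coeffs_of_polynomial_over_one_plus:
  fixes e p :: "nat \<Rightarrow> real"
  assumes "\<And>t. (\<Sum>m\<le>Suc M. e m * t^m) = (1 + t) * (\<Sum>m\<le>M. p m * t^m)" and "m \<le> M"
  shows "p m = (\<Sum>r\<le>m. (-1)^r * e (m - r))"
proof -
  define d where "d m = (if m \<le> M then p m else 0) + (if m = 0 then 0 else p (m - 1))" for m
  have "(1 + t) * (\<Sum>m\<le>M. p m * t^m) = (\<Sum>m\<le>Suc M. d m * t^m)" for t :: real
  proof -
    have "(\<Sum>m\<le>Suc M. (if m = 0 then 0 else p (m - 1)) * t^m) = t * (\<Sum>m\<le>M. p m * t^m)"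
      by (simp add: sum.atMost_Suc_shift sum_distrib_left mult_ac del: sum.atMost_Suc)
    moreover have "(\<Sum>m\<le>Suc M. (if m \<le> M then p m else 0) * t^m) = (\<Sum>m\<le>M. p m * t^m)"
      by (simp add: atMost_Suc)
    ultimately show ?thesis by (simp add: d_def distrib_right sum.distrib algebra_simps)
  qed
  then have "\<forall>m\<le>Suc M. e m = d m"
    using assms(1) polyfun_eq_coeffs[of e "Suc M" d] by presburger
  then have e: "e m = (if m \<le> M then p m else 0) + (if m = 0 then 0 else p (m - 1))"
    if "m \<le> Suc M" for m
    using that by (simp add: d_def)
  show ?thesis using assms(2)
  proof (induction m)
    case (Suc m)
    then have "p (Suc m) = e (Suc m) - p m" using e[of "Suc m"] by simp
    also have "\<dots> = (\<Sum>r\<le>Suc m. (-1)^r * e (Suc m - r))"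
      using Suc by (simp add: sum.atMost_Suc_shift sum_negf[symmetric] del: sum.atMost_Suc)
    finally show ?case .
  qed (use e[of 0] in simp)
qed

lemma sum_triples_2i_j_r:
  fixes F :: "nat \<Rightarrow> nat \<Rightarrow> nat \<Rightarrow> 'a::comm_monoid_add"
  shows "(\<Sum>(i,j,r) \<in> {(i,j,r). 2*i + j + r = k}. F i j r)
    = (\<Sum>i=0..k div 2. \<Sum>r\<le>k - 2*i. F i (k - 2*i - r) r)"
proof -
  define g where "g = (\<lambda>(i::nat, r::nat). (i, k - 2*i - r, r))"
  define S where "S = Sigma {0..k div 2} (\<lambda>i. {..k - 2*i})"
  have img: "{(i,j,r). 2*i + j + r = k} = g ` S"
  proof
    show "{(i,j,r). 2*i + j + r = k} \<subseteq> g ` S"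
    proof
      fix x assume "x \<in> {(i,j,r). 2*i + j + r = k}"
      then obtain i j r where x: "x = (i,j,r)" "2*i + j + r = k" by auto
      then have "(i, r) \<in> S" "x = g (i, r)" unfolding S_def g_def by auto
      then show "x \<in> g ` S" by blast
    qed
    show "g ` S \<subseteq> {(i,j,r). 2*i + j + r = k}" unfolding S_def g_def by auto
  qed
  have inj: "inj_on g S" unfolding g_def by (auto intro!: inj_onI)
  have "(\<Sum>(i,j,r) \<in> {(i,j,r). 2*i + j + r = k}. F i j r) = (\<Sum>x\<in>S. (\<lambda>(i,j,r). F i j r) (g x))"
    unfolding img sum.reindex[OF inj] by (simp add: comp_def)
  also have "\<dots> = (\<Sum>(i,r)\<in>S. F i (k - 2*i - r) r)"
    by (intro sum.cong refl) (auto simp: g_def)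
  also have "\<dots> = (\<Sum>i=0..k div 2. \<Sum>r\<le>k - 2*i. F i (k - 2*i - r) r)"
    unfolding S_def by (subst sum.Sigma[symmetric]) auto
  finally show ?thesis .
qed

lemma even_desc_odd_length_inversion:
  assumes "k \<le> n"
  shows "2^k * real (even_desc (2*n+1) k)
    = (\<Sum>i = 0..k div 2. (-1)^i * coef (n - k) i * real (eulerian (2*n+1) (k - 2*i)))"
proof -
  define b where "b k = 2^k * real (even_desc (2*n+1) k)" for k
  have poly: "(\<Sum>m\<le>2*n+1. real (eulerian (2*n+1) m) * t^m)
      = (\<Sum>k\<le>n. b k * t^k * (1 + t^2)^(n - k))" for t :: real
    unfolding b_def by (rule eulerian_polynomial_odd)
  have "real (eulerian (2*n+1) m) = expansion_coeff b n m" if "m \<le> 2*n+1" for m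
    by (rule expansion_coeff_unique[OF _ that poly]) simp
  then show ?thesis
    using expansion_coeff_inversion[OF assms, of b] assms by (simp add: b_def)
qed

lemma even_desc_even_length_inversion:
  assumes "k \<le> n"
  shows "2^k * real (even_desc (2*n+2) k) = (\<Sum>(i,j,r) \<in> {(i,j,r). 2*i + j + r = k}.
    (-1)^(r+i) * coef (n - k) i * real (eulerian (2*n+2) j))"
proof -
  define b where "b k = 2^k * real (even_desc (2*n+2) k)" for k
  define e where "e m = real (eulerian (2*n+2) m)" for m
  have "(\<Sum>m\<le>Suc (2*n+1). e m * t^m) = (1 + t) * (\<Sum>m\<le>2*n+1. expansion_coeff b n m * t^m)" for t
    using eulerian_polynomial_even[of n t] sum_expansion_coeff[of n "2*n+1" b t]
    by (simp add: e_def b_def)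
  then have p: "expansion_coeff b n m = (\<Sum>r\<le>m. (-1)^r * e (m - r))" if "m \<le> 2*n+1" for m
    using that by (rule coeffs_of_polynomial_over_one_plus)
  have "b k = (\<Sum>i = 0..k div 2. (-1)^i * coef (n - k) i * expansion_coeff b n (k - 2*i))"
    by (rule expansion_coeff_inversion[OF assms])
  also have "\<dots> = (\<Sum>i = 0..k div 2. \<Sum>r\<le>k - 2*i. (-1)^(r+i) * coef (n - k) i * e (k - 2*i - r))"
    using assms by (simp add: p sum_distrib_left power_add mult_ac)
  also have "\<dots> = (\<Sum>(i,j,r) \<in> {(i,j,r). 2*i + j + r = k}. (-1)^(r+i) * coef (n - k) i * e j)"
    by (rule sum_triples_2i_j_r[symmetric])
  finally show ?thesis by (simp add: b_def e_def)
qed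

theorem corollary3p3:
  fixes n k :: nat
  assumes "k \<le> n"
  shows "real (even_desc (2*n+1) k) =
           (1 / 2^k) * (\<Sum>i = 0..k div 2. (-1)^i * coef (n - k) i * real (eulerian (2*n+1) (k - 2*i)))
         \<and> real (even_desc (2*n+2) k) =
           (1 / 2^k) * (\<Sum>(i,j,r) \<in> {(i,j,r). 2*i + j + r = k}.
               (-1)^(r+i) * coef (n - k) i * real (eulerian (2*n+2) j))"
proof -
  have "x = 1 / 2^k * y" if "2^k * x = y" for x y :: real
    using that by (simp add: field_simps)
  then show ?thesis
    using even_desc_odd_length_inversion[OF assms] even_desc_even_length_inversion[OF assms] by blast
qed

end
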